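(* In the $q$-boson algebra $\mathcal H_n$ with $z=1$ (site indices read modulo $n$, so $\beta_0=\beta_n$, $\beta^*_{n+1}=\beta^*_1$), for every $j=1,\dots,n$ one has the identities of formal power series in $v$ $$Q^-(v)\beta_j-\beta_jQ^-(v)=-v\,\beta_{j-1}\big[Q^-(v)-\beta_jQ^-(v)\beta_j^*\big],$$ $$Q^-(v)\beta_j^*-\beta_j^*Q^-(v)=v\big[Q^-(v)-\beta_jQ^-(v)\beta_j^*\big]\beta^*_{j+1}.$$
   Context: $q$ is an indeterminate, $n\ge1$. $\mathcal H_n$ is the $\mathbb C(q)$-algebra generated by $\beta_i,\beta_i^*,q^{\pm N_i}$ ($i=1,\dots,n$) with relations: $q^{\pm N_i}$ mutually inverse and commuting, $q^{N_i}\beta_j=q^{-\delta_{ij}}\beta_jq^{N_i}$, $q^{N_i}\beta_j^*=q^{\delta_{ij}}\beta^*_jq^{N_i}$, $\beta_i\beta_j^*-\beta_j^*\beta_i=\delta_{ij}(1-q^2)q^{2N_i}$, $\beta_i\beta_i^*-q^2\beta_i^*\beta_i=1-q^2$, generators at different sites commute. $(q^2)_m=\prod_{j=1}^m(1-q^{2j})$. $Q^-(v)=\sum_{r\ge0}Q^-_rv^r$ with $$Q^-_r=\sum_{\alpha}z^{\alpha_n}\frac{\beta_n^{\alpha_n}(\beta_{n-1}\beta_n^* )^{\alpha_{n-1}}\cdots(\beta_1\beta_2^* )^{\alpha_1}(\beta_1^* )^{\alpha_n}}{(q^2)_{\alpha_1}\cdots(q^2)_{\alpha_n}}\prod_{i=1}^nq^{\alpha_i(\alpha_i+1)},$$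 summed over compositions $\alpha\in\mathbb Z^n_{\ge0}$ of $r$ (here $z=1$). *)

theory Defs
  imports Complex_Main "HOL-Computational_Algebra.Polynomial" "HOL-Computational_Algebra.Fraction_Field"
    "HOL-Computational_Algebra.Formal_Power_Series"
begin

type_synonym Cq = "complex poly fract"

definition qq :: Cq where "qq = Fract [:0, 1:] 1"

definition qpoch :: "nat \<Rightarrow> Cq" where
  "qpoch m = (\<Prod>j=1..m. 1 - qq ^ (2 * j))"

definition site_pred :: "nat \<Rightarrow> nat \<Rightarrow> nat" where
  "site_pred n j = (if j = 1 then n else j - 1)"
definition site_succ :: "nat \<Rightarrow> nat \<Rightarrow> nat" where
  "site_succ n j = (if j = n then 1 else j + 1)"

text \<open>A C(q)-algebra A (a ring_1 together with a unital ring homomorphism phi from C(q)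
  into the centre of A) containing elements beta i, beta* i, q^{N_i}, q^{-N_i} (i = 1..n)
  satisfying the defining relations of the q-boson algebra H_n.  Any such data is the
  same as a C(q)-algebra homomorphism H_n -> A; H_n itself is one instance.\<close>
definition qboson_alg ::
  "nat \<Rightarrow> (Cq \<Rightarrow> 'a::ring_1) \<Rightarrow> (nat \<Rightarrow> 'a) \<Rightarrow> (nat \<Rightarrow> 'a) \<Rightarrow> (nat \<Rightarrow> 'a) \<Rightarrow> (nat \<Rightarrow> 'a) \<Rightarrow> bool"
where
  "qboson_alg n \<phi> \<beta> \<beta>s K Ki \<longleftrightarrow>
     (\<forall>x y. \<phi> (x + y) = \<phi> x + \<phi> y) \<and> (\<forall>x y. \<phi> (x * y) = \<phi> x * \<phi> y) \<and> \<phi> 1 = 1 \<and>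
     (\<forall>c a. \<phi> c * a = a * \<phi> c) \<and>
     (\<forall>i\<in>{1..n}. \<forall>j\<in>{1..n}.
        K i * Ki i = 1 \<and> Ki i * K i = 1 \<and>
        K i * K j = K j * K i \<and> K i * Ki j = Ki j * K i \<and> Ki i * Ki j = Ki j * Ki i \<and>
        K i * \<beta> j = \<phi> (if i = j then inverse qq else 1) * \<beta> j * K i \<and>
        K i * \<beta>s j = \<phi> (if i = j then qq else 1) * \<beta>s j * K i \<and>
        \<beta> i * \<beta>s j - \<beta>s j * \<beta> i = (if i = j then \<phi> (1 - qq ^ 2) * K i ^ 2 else 0) \<and>
        (i \<noteq> j \<longrightarrow> \<beta> i * \<beta> j = \<beta> j * \<beta> i \<and> \<beta>s i * \<beta>s j = \<beta>s j * \<beta>s i \<and>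
                   Ki i * \<beta> j = \<beta> j * Ki i \<and> Ki i * \<beta>s j = \<beta>s j * Ki i)) \<and>
     (\<forall>i\<in>{1..n}. \<beta> i * \<beta>s i - \<phi> (qq ^ 2) * \<beta>s i * \<beta> i = \<phi> (1 - qq ^ 2))"

definition compositions :: "nat \<Rightarrow> nat \<Rightarrow> (nat \<Rightarrow> nat) set" where
  "compositions n r = {\<alpha>. (\<forall>i. i \<notin> {1..n} \<longrightarrow> \<alpha> i = 0) \<and> (\<Sum>i=1..n. \<alpha> i) = r}"

definition Qminus_coeff ::
  "nat \<Rightarrow> (Cq \<Rightarrow> 'a::ring_1) \<Rightarrow> (nat \<Rightarrow> 'a) \<Rightarrow> (nat \<Rightarrow> 'a) \<Rightarrow> nat \<Rightarrow> 'a" where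
  "Qminus_coeff n \<phi> \<beta> \<beta>s r =
     (\<Sum>\<alpha>\<in>compositions n r.
        \<phi> ((\<Prod>i=1..n. qq ^ (\<alpha> i * (\<alpha> i + 1))) / (\<Prod>i=1..n. qpoch (\<alpha> i))) *
        (\<beta> n ^ \<alpha> n *
         prod_list (map (\<lambda>i. (\<beta> i * \<beta>s (i + 1)) ^ \<alpha> i) (rev [1..<n])) *
         \<beta>s 1 ^ \<alpha> n))"

definition Qminus ::
  "nat \<Rightarrow> (Cq \<Rightarrow> 'a::ring_1) \<Rightarrow> (nat \<Rightarrow> 'a) \<Rightarrow> (nat \<Rightarrow> 'a) \<Rightarrow> 'a fps" where
  "Qminus n \<phi> \<beta> \<beta>s = Abs_fps (Qminus_coeff n \<phi> \<beta> \<beta>s)"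

end

theory Submission
  imports Defs
begin

text \<open>Group the monomial of Q^-_r indexed by a composition \<alpha> site by site: it is the ordered
  product over k = n, ..., 1 of the local factors \<beta>_k^\<alpha>_k \<beta>*_k^\<alpha>_(k-1) (with \<alpha>_0 = \<alpha>_n),
  and factors at different sites commute. So commuting \<beta>_j or \<beta>*_j with a monomial only changes
  its factor at site j, and the q-commutation relation
  \<beta> \<beta>*^m = q^(2m) \<beta>*^m \<beta> + (1 - q^(2m)) \<beta>*^(m-1) turns that change into a scalar multiple of
  \<beta>_j^a \<beta>*_j^b - \<beta>_j^(a+1) \<beta>*_j^(b+1), which is also the factor at site j of the monomials of
  Q^- - \<beta>_j Q^- \<beta>*_j. Raising \<alpha>_(j-1) (resp. \<alpha>_j) by one matches the two sides term by term,
  because the ratio of the weights of neighbouring compositions is exactly the scalar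
  (1 - q^(2m)) q^(-2m) produced by the commutation relation.\<close>

lemma qcommute_power_right:
  fixes x y s :: "'a::ring_1"
  assumes central: "\<And>z. s * z = z * s" and qcomm: "x * y = s * (y * x) + (1 - s)"
  shows "x * y ^ Suc b = s ^ Suc b * (y ^ Suc b * x) + (1 - s ^ Suc b) * y ^ b"
proof (induction b)
  case 0
  show ?case using qcomm by simp
next
  case (Suc b)
  let ?S = "s ^ Suc b"
  have "x * y ^ Suc (Suc b) = (?S * (y ^ Suc b * x) + (1 - ?S) * y ^ b) * y"
    by (simp only: power_Suc2[of y "Suc b"] mult.assoc[symmetric] Suc)
  also have "\<dots> = ?S * (y ^ Suc b * (x * y)) + (1 - ?S) * y ^ Suc b"
    by (simp add: distrib_right mult.assoc power_commutes)
  also have "y ^ Suc b * (x * y) = s * (y ^ Suc (Suc b) * x) + (1 - s) * y ^ Suc b"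
  proof -
    have "y ^ Suc b * (s * (y * x)) = s * (y ^ Suc (Suc b) * x)"
      by (simp only: mult.assoc[symmetric] central[of "y ^ Suc b", symmetric])
         (simp only: mult.assoc power_Suc2)
    moreover have "y ^ Suc b * (1 - s) = (1 - s) * y ^ Suc b"
      by (simp add: algebra_simps central)
    ultimately show ?thesis
      by (simp only: qcomm distrib_left)
  qed
  also have "?S * (s * (y ^ Suc (Suc b) * x) + (1 - s) * y ^ Suc b) + (1 - ?S) * y ^ Suc b
      = s ^ Suc (Suc b) * (y ^ Suc (Suc b) * x) + (1 - s ^ Suc (Suc b)) * y ^ Suc b"
  proof -
    have "?S * (s * w + (1 - s) * v) + (1 - ?S) * v = (?S * s) * w + (1 - ?S * s) * v" for w v
      by (simp add: algebra_simps)
    then show ?thesis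
      by (simp only: power_Suc2[of s "Suc b", symmetric])
  qed
  finally show ?case .
qed

lemma qcommute_power_left:
  fixes x y s :: "'a::ring_1"
  assumes central: "\<And>z. s * z = z * s" and qcomm: "x * y = s * (y * x) + (1 - s)"
  shows "x ^ Suc a * y = s ^ Suc a * (y * x ^ Suc a) + (1 - s ^ Suc a) * x ^ a"
proof (induction a)
  case 0
  show ?case using qcomm by simp
next
  case (Suc a)
  let ?S = "s ^ Suc a"
  have central_left: "x * (c * w) = c * (x * w)" if "\<And>z. c * z = z * c" for c w
    by (simp only: mult.assoc[symmetric] that[of x])
  have S_central: "?S * z = z * ?S" for z
    by (rule power_commuting_commutes[OF central])
  have "x ^ Suc (Suc a) * y = x * (?S * (y * x ^ Suc a) + (1 - ?S) * x ^ a)"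
    by (simp only: power_Suc[of x "Suc a"] mult.assoc Suc)
  also have "\<dots> = ?S * (x * (y * x ^ Suc a)) + (1 - ?S) * (x * x ^ a)"
  proof -
    have S'_central: "(1 - ?S) * z = z * (1 - ?S)" for z
      by (simp only: left_diff_distrib right_diff_distrib S_central mult_1_left mult_1_right)
    show ?thesis
      by (simp only: distrib_left central_left[OF S_central] central_left[OF S'_central])
  qed
  also have "\<dots> = ?S * ((x * y) * x ^ Suc a) + (1 - ?S) * x ^ Suc a"
    by (simp only: mult.assoc power_Suc)
  also have "(x * y) * x ^ Suc a = s * (y * x ^ Suc (Suc a)) + (1 - s) * x ^ Suc a"
    by (simp only: qcomm distrib_right mult.assoc power_Suc)
  also have "?S * (s * (y * x ^ Suc (Suc a)) + (1 - s) * x ^ Suc a) + (1 - ?S) * x ^ Suc a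
      = s ^ Suc (Suc a) * (y * x ^ Suc (Suc a)) + (1 - s ^ Suc (Suc a)) * x ^ Suc a"
  proof -
    have "?S * (s * w + (1 - s) * v) + (1 - ?S) * v = (?S * s) * w + (1 - ?S * s) * v" for w v
      by (simp add: algebra_simps)
    then show ?thesis
      by (simp only: power_Suc2[of s "Suc a", symmetric])
  qed
  finally show ?case .
qed

lemma unit_shift_diff:
  fixes s u x y z :: "'a::ring_1"
  assumes "s * u = 1" "u * s = 1" and y: "y = s * x + (1 - s) * z"
  shows "x - y = - ((1 - s) * u * (z - y))"
proof -
  have "u * y = x + (u - 1) * z"
    using assms by (simp add: y algebra_simps flip: mult.assoc)
  moreover have "(1 - s) * u = u - 1"
    using assms by (simp add: algebra_simps)
  ultimately show ?thesis
    by (simp add: algebra_simps)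
qed

lemma prod_list_commute:
  fixes x :: "'a::monoid_mult"
  shows "(\<And>y. y \<in> set ys \<Longrightarrow> x * y = y * x) \<Longrightarrow> x * prod_list ys = prod_list ys * x"
proof (induction ys)
  case (Cons y ys)
  then have xy: "x * y = y * x" and IH: "x * prod_list ys = prod_list ys * x"
    by simp_all
  have "x * prod_list (y # ys) = y * (x * prod_list ys)"
    by (simp only: prod_list.Cons mult.assoc[symmetric] xy)
  also have "\<dots> = prod_list (y # ys) * x"
    by (simp only: IH prod_list.Cons mult.assoc)
  finally show ?case .
qed simp

lemma prod_list_map_fun_upd_split:
  assumes "distinct xs" "i \<in> set xs"
  obtains ys zs where "set ys \<union> set zs = set xs - {i}"
    and "\<And>w. prod_list (map (f(i := w)) xs) = prod_list (map f ys) * w * prod_list (map f zs)"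
proof -
  obtain ys zs where xs: "xs = ys @ i # zs"
    using split_list[OF assms(2)] by blast
  with assms(1) have "i \<notin> set ys" "i \<notin> set zs"
    by auto
  then show thesis
    by (intro that[of ys zs]) (use assms(1) in \<open>auto simp: xs mult.assoc\<close>)
qed

lemma prod_comp_fun_upd:
  "finite A \<Longrightarrow> i \<in> A \<Longrightarrow> (\<Prod>k\<in>A. h ((\<gamma>(i := v)) k)) = h v * (\<Prod>k\<in>A - {i}. h (\<gamma> k))"
  by (simp add: prod.remove[of A i] prod.cong[of "A - {i}" "A - {i}" "\<lambda>k. h ((\<gamma>(i := v)) k)"])

lemma qq_power: "qq ^ k = Fract ([:0, 1:] ^ k) 1"
  by (induction k) (simp_all add: qq_def One_fract_def)

lemma qq_power_neq_1: "k > 0 \<Longrightarrow> qq ^ k \<noteq> 1"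
proof
  assume k: "k > 0" and "qq ^ k = 1"
  then have "([:0, 1:] :: complex poly) ^ k = 1"
    by (simp add: qq_power One_fract_def eq_fract)
  then have "degree (([:0, 1:] :: complex poly) ^ k) = 0"
    by simp
  with k show False
    by (simp add: degree_power_eq)
qed

lemma qq_neq_0: "qq \<noteq> 0"
  by (simp add: qq_def Zero_fract_def eq_fract)

lemma qpoch_Suc: "qpoch (Suc a) = qpoch a * (1 - qq ^ (2 * Suc a))"
  unfolding qpoch_def by (simp add: prod.atLeast1_atMost_eq prod.nat_ivl_Suc')

lemma qpoch_neq_0: "qpoch a \<noteq> 0"
proof (induction a)
  case (Suc a)
  have "qq ^ (2 * Suc a) \<noteq> 1"
    by (rule qq_power_neq_1) simp
  with Suc show ?case
    by (simp add: qpoch_Suc)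
qed (simp add: qpoch_def)

definition qweight :: "nat \<Rightarrow> (nat \<Rightarrow> nat) \<Rightarrow> Cq" where
  "qweight n \<alpha> = (\<Prod>i=1..n. qq ^ (\<alpha> i * (\<alpha> i + 1))) / (\<Prod>i=1..n. qpoch (\<alpha> i))"

definition qratio :: "nat \<Rightarrow> Cq" where
  "qratio m = (1 - qq ^ (2 * m)) / qq ^ (2 * m)"

lemma qweight_Suc:
  assumes i: "i \<in> {1..n}"
  shows "qweight n (\<gamma>(i := Suc (\<gamma> i))) * qratio (Suc (\<gamma> i)) = qweight n \<gamma>"
proof -
  let ?a = "\<gamma> i" and ?A = "{1..n} - {i}"
  let ?N = "\<Prod>k\<in>?A. qq ^ (\<gamma> k * (\<gamma> k + 1))" and ?M = "\<Prod>k\<in>?A. qpoch (\<gamma> k)"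
  have "qweight n (\<gamma>(i := Suc ?a)) = qq ^ (Suc ?a * (Suc ?a + 1)) * ?N / (qpoch (Suc ?a) * ?M)"
    unfolding qweight_def
    using prod_comp_fun_upd[OF finite_atLeastAtMost i, of "\<lambda>x. qq ^ (x * (x + 1))"]
      prod_comp_fun_upd[OF finite_atLeastAtMost i, of qpoch]
    by simp
  also have "qq ^ (Suc ?a * (Suc ?a + 1)) = qq ^ (?a * (?a + 1)) * qq ^ (2 * Suc ?a)"
  proof -
    have "Suc ?a * (Suc ?a + 1) = ?a * (?a + 1) + 2 * Suc ?a"
      by (simp add: algebra_simps)
    then show ?thesis
      by (simp only: power_add)
  qed
  finally have "qweight n (\<gamma>(i := Suc ?a)) * qratio (Suc ?a)
      = qq ^ (?a * (?a + 1)) * qq ^ (2 * Suc ?a) * ?N / (qpoch ?a * (1 - qq ^ (2 * Suc ?a)) * ?M)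
        * ((1 - qq ^ (2 * Suc ?a)) / qq ^ (2 * Suc ?a))"
    by (simp only: qpoch_Suc qratio_def)
  also have "\<dots> = qq ^ (?a * (?a + 1)) * ?N / (qpoch ?a * ?M)"
    using qq_power_neq_1[of "2 * Suc ?a"] qq_neq_0 by (simp add: divide_simps)
  also have "\<dots> = qweight n \<gamma>"
    unfolding qweight_def using i by (simp add: prod.remove)
  finally show ?thesis .
qed

lemma finite_compositions: "finite (compositions n r)"
proof (rule finite_subset)
  show "compositions n r \<subseteq> {f. \<forall>x. (x \<in> {1..n} \<longrightarrow> f x \<in> {0..r}) \<and> (x \<notin> {1..n} \<longrightarrow> f x = 0)}"
  proof safe
    fix f x assume f: "f \<in> compositions n r" and x: "x \<in> {1..n}"
    have "f x \<le> (\<Sum>i=1..n. f i)"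
      using x by (intro member_le_sum) auto
    with f show "f x \<in> {0..r}"
      by (simp add: compositions_def)
  qed (auto simp: compositions_def)
qed (intro finite_set_of_finite_funs; simp)

lemma compositions_0: "compositions n 0 = {\<lambda>_. 0}"
proof
  show "compositions n 0 \<subseteq> {\<lambda>_. 0}"
  proof
    fix \<alpha> assume "\<alpha> \<in> compositions n 0"
    then have "\<alpha> i = 0" for i
      by (cases "i \<in> {1..n}") (auto simp: compositions_def)
    then show "\<alpha> \<in> {\<lambda>_. 0}"
      by auto
  qed
qed (simp add: compositions_def)

lemma sum_fun_upd_nat:
  "finite A \<Longrightarrow> i \<in> A \<Longrightarrow> sum (f(i := v)) A + f i = sum f A + (v :: nat)"
  by (simp add: sum.remove[of A i] sum.cong[of "A - {i}" "A - {i}" "f(i := v)" f])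

lemma sum_compositions_Suc:
  assumes i: "i \<in> {1..n}"
    and vanish: "\<And>\<alpha>. \<alpha> \<in> compositions n (Suc r) \<Longrightarrow> \<alpha> i = 0 \<Longrightarrow> g \<alpha> = (0 :: 'a::comm_monoid_add)"
  shows "(\<Sum>\<alpha>\<in>compositions n (Suc r). g \<alpha>) = (\<Sum>\<gamma>\<in>compositions n r. g (\<gamma>(i := Suc (\<gamma> i))))"
proof -
  have up: "\<gamma>(i := Suc (\<gamma> i)) \<in> compositions n (Suc r)" if "\<gamma> \<in> compositions n r" for \<gamma>
    using that i sum_fun_upd_nat[of "{1..n}" i \<gamma> "Suc (\<gamma> i)"] by (auto simp: compositions_def)
  have down: "\<alpha>(i := \<alpha> i - Suc 0) \<in> compositions n r"
    if "\<alpha> \<in> compositions n (Suc r)" "0 < \<alpha> i" for \<alpha>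
    using that i sum_fun_upd_nat[of "{1..n}" i \<alpha> "\<alpha> i - Suc 0"] by (auto simp: compositions_def)
  have "(\<Sum>\<alpha>\<in>compositions n (Suc r). g \<alpha>) = (\<Sum>\<alpha>\<in>{\<alpha>\<in>compositions n (Suc r). \<alpha> i \<noteq> 0}. g \<alpha>)"
    using vanish finite_compositions by (intro sum.mono_neutral_right) auto
  also have "\<dots> = (\<Sum>\<gamma>\<in>compositions n r. g (\<gamma>(i := Suc (\<gamma> i))))"
    by (rule sum.reindex_bij_witness[where j = "\<lambda>\<alpha>. \<alpha>(i := \<alpha> i - 1)" and i = "\<lambda>\<gamma>. \<gamma>(i := Suc (\<gamma> i))"])
       (auto intro: up down)
  finally show ?thesis .
qed

lemma site_pred_in: "j \<in> {1..n} \<Longrightarrow> site_pred n j \<in> {1..n}"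
  by (auto simp: site_pred_def)

lemma site_succ_in: "j \<in> {1..n} \<Longrightarrow> site_succ n j \<in> {1..n}"
  by (auto simp: site_succ_def)

lemma site_pred_neq: "2 \<le> n \<Longrightarrow> j \<in> {1..n} \<Longrightarrow> site_pred n j \<noteq> j"
  by (auto simp: site_pred_def)

lemma site_succ_neq: "2 \<le> n \<Longrightarrow> j \<in> {1..n} \<Longrightarrow> site_succ n j \<noteq> j"
  by (auto simp: site_succ_def)

lemma site_pred_site_succ: "j \<in> {1..n} \<Longrightarrow> site_pred n (site_succ n j) = j"
  by (auto simp: site_pred_def site_succ_def)

lemma site_pred_inj: "j \<in> {1..n} \<Longrightarrow> k \<in> {1..n} \<Longrightarrow> site_pred n k = site_pred n j \<Longrightarrow> k = j"
  by (auto simp: site_pred_def split: if_splits)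

lemma site_pred_succ_one_site: "j \<in> {1..1} \<Longrightarrow> site_pred 1 j = j \<and> site_succ 1 j = j"
  by (auto simp: site_pred_def site_succ_def)

locale qboson =
  fixes n :: nat and \<phi> :: "Cq \<Rightarrow> 'a::ring_1" and \<beta> \<beta>s K Ki :: "nat \<Rightarrow> 'a"
  assumes qboson_alg: "qboson_alg n \<phi> \<beta> \<beta>s K Ki" and n_ge_1: "n \<ge> 1"
begin

lemma phi_add: "\<phi> (x + y) = \<phi> x + \<phi> y"
  and phi_mult: "\<phi> (x * y) = \<phi> x * \<phi> y"
  and phi_one: "\<phi> 1 = 1"
  and phi_central: "\<phi> c * a = a * \<phi> c"
  using qboson_alg unfolding qboson_alg_def by blast+

lemma phi_diff: "\<phi> (x - y) = \<phi> x - \<phi> y"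
  using phi_add[of "x - y" y] by (simp add: algebra_simps)

lemma phi_minus: "\<phi> (- x) = - \<phi> x"
  using phi_diff[of 0 x] phi_diff[of 0 0] by simp

lemma phi_power: "\<phi> (x ^ m) = \<phi> x ^ m"
  by (induction m) (simp_all add: phi_one phi_mult)

lemma phi_left_commute: "a * (\<phi> c * b) = \<phi> c * (a * b)"
  by (metis mult.assoc phi_central)

lemma one_minus_phi_left_commute: "a * ((1 - \<phi> c) * b) = (1 - \<phi> c) * (a * b)"
  by (simp add: algebra_simps phi_left_commute)

lemma site_relations:
  assumes "i \<in> {1..n}" "k \<in> {1..n}"
  shows "\<beta> i * \<beta>s k - \<beta>s k * \<beta> i = (if i = k then \<phi> (1 - qq ^ 2) * K i ^ 2 else 0)"
    and "i \<noteq> k \<Longrightarrow> \<beta> i * \<beta> k = \<beta> k * \<beta> i"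
    and "i \<noteq> k \<Longrightarrow> \<beta>s i * \<beta>s k = \<beta>s k * \<beta>s i"
  using qboson_alg assms unfolding qboson_alg_def by blast+

lemma beta_betas_commute: "i \<in> {1..n} \<Longrightarrow> k \<in> {1..n} \<Longrightarrow> i \<noteq> k \<Longrightarrow> \<beta> i * \<beta>s k = \<beta>s k * \<beta> i"
  using site_relations(1)[of i k] by simp

lemma beta_betas_qcommute:
  assumes "i \<in> {1..n}"
  shows "\<beta> i * \<beta>s i = \<phi> (qq ^ 2) * (\<beta>s i * \<beta> i) + (1 - \<phi> (qq ^ 2))"
proof -
  have "\<beta> i * \<beta>s i - \<phi> (qq ^ 2) * \<beta>s i * \<beta> i = \<phi> (1 - qq ^ 2)"
    using qboson_alg assms unfolding qboson_alg_def by blast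
  then show ?thesis
    by (simp add: phi_diff phi_one algebra_simps)
qed

lemma beta_betas_power:
  assumes "i \<in> {1..n}"
  shows "\<beta> i * \<beta>s i ^ Suc b
    = \<phi> (qq ^ (2 * Suc b)) * (\<beta>s i ^ Suc b * \<beta> i) + (1 - \<phi> (qq ^ (2 * Suc b))) * \<beta>s i ^ b"
  using qcommute_power_right[OF phi_central beta_betas_qcommute[OF assms]]
  by (simp only: power_mult phi_power)

lemma beta_power_betas:
  assumes "i \<in> {1..n}"
  shows "\<beta> i ^ Suc a * \<beta>s i
    = \<phi> (qq ^ (2 * Suc a)) * (\<beta>s i * \<beta> i ^ Suc a) + (1 - \<phi> (qq ^ (2 * Suc a))) * \<beta> i ^ a"
  using qcommute_power_left[OF phi_central beta_betas_qcommute[OF assms]]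
  by (simp only: power_mult phi_power)

inductive_set site_subring :: "nat \<Rightarrow> 'a set" for k :: nat where
  beta: "\<beta> k \<in> site_subring k"
| betas: "\<beta>s k \<in> site_subring k"
| one: "1 \<in> site_subring k"
| mult: "x \<in> site_subring k \<Longrightarrow> y \<in> site_subring k \<Longrightarrow> x * y \<in> site_subring k"
| diff: "x \<in> site_subring k \<Longrightarrow> y \<in> site_subring k \<Longrightarrow> x - y \<in> site_subring k"

lemma site_subring_power: "x \<in> site_subring k \<Longrightarrow> x ^ m \<in> site_subring k"
  by (induction m) (auto intro: site_subring.intros)

lemma site_subring_commute_generators:
  assumes "i \<in> {1..n}" "k \<in> {1..n}" "i \<noteq> k" "x \<in> site_subring k"
  shows "x * \<beta> i = \<beta> i * x \<and> x * \<beta>s i = \<beta>s i * x"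
  using assms(4)
proof induction
  case beta
  show ?case using assms site_relations(2) beta_betas_commute by metis
next
  case betas
  show ?case using assms site_relations(3) beta_betas_commute by metis
next
  case (mult x y)
  then show ?case by (metis mult.assoc)
next
  case (diff x y)
  then show ?case by (simp add: algebra_simps)
qed simp

lemma site_subring_commute:
  assumes "i \<in> {1..n}" "k \<in> {1..n}" "i \<noteq> k" "x \<in> site_subring k" "y \<in> site_subring i"
  shows "x * y = y * x"
  using assms(5)
proof induction
  case (mult y z)
  then show ?case by (metis mult.assoc)
next
  case (diff y z)
  then show ?case by (simp add: algebra_simps)
qed (use site_subring_commute_generators[OF assms(1-4)] in simp_all)

lemma phi_qq_power_inverse:
  "\<phi> (qq ^ m) * \<phi> (inverse (qq ^ m)) = 1" "\<phi> (inverse (qq ^ m)) * \<phi> (qq ^ m) = 1"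
  using qq_neq_0 by (simp_all flip: phi_mult add: phi_one)

lemma phi_qratio: "\<phi> (qratio m) = (1 - \<phi> (qq ^ (2 * m))) * \<phi> (inverse (qq ^ (2 * m)))"
  by (simp add: qratio_def divide_inverse phi_mult phi_diff phi_one)

definition site_diff :: "nat \<Rightarrow> nat \<Rightarrow> nat \<Rightarrow> 'a" where
  "site_diff k a b = \<beta> k ^ a * \<beta>s k ^ b - \<beta> k ^ Suc a * \<beta>s k ^ Suc b"

lemma site_diff_in: "site_diff k a b \<in> site_subring k"
  unfolding site_diff_def by (intro site_subring.intros site_subring_power)

lemma commutator_betas_power_beta:
  assumes i: "i \<in> {1..n}"
  shows "\<beta> i ^ a * (\<beta>s i ^ Suc b * \<beta> i - \<beta> i * \<beta>s i ^ Suc b) = - (\<phi> (qratio (Suc b)) * site_diff i a b)"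
proof -
  let ?S = "\<phi> (qq ^ (2 * Suc b))" and ?U = "\<phi> (inverse (qq ^ (2 * Suc b)))"
  let ?X = "\<beta> i ^ a * (\<beta>s i ^ Suc b * \<beta> i)" and ?Y = "\<beta> i ^ Suc a * \<beta>s i ^ Suc b"
    and ?Z = "\<beta> i ^ a * \<beta>s i ^ b"
  have "?Y = \<beta> i ^ a * (\<beta> i * \<beta>s i ^ Suc b)"
    by (simp only: power_Suc2 mult.assoc)
  also have "\<dots> = ?S * ?X + (1 - ?S) * ?Z"
    by (simp only: beta_betas_power[OF i] distrib_left
        phi_left_commute[of "\<beta> i ^ a"] one_minus_phi_left_commute[of "\<beta> i ^ a"])
  finally have Y: "?Y = ?S * ?X + (1 - ?S) * ?Z" .
  have "\<beta> i ^ a * (\<beta>s i ^ Suc b * \<beta> i - \<beta> i * \<beta>s i ^ Suc b) = ?X - ?Y"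
    by (simp only: right_diff_distrib power_Suc2 mult.assoc)
  also have "\<dots> = - ((1 - ?S) * ?U * (?Z - ?Y))"
    by (rule unit_shift_diff[OF phi_qq_power_inverse Y])
  finally show ?thesis
    unfolding phi_qratio site_diff_def .
qed

lemma commutator_beta_power_betas:
  assumes i: "i \<in> {1..n}"
  shows "(\<beta> i ^ Suc a * \<beta>s i - \<beta>s i * \<beta> i ^ Suc a) * \<beta>s i ^ b = \<phi> (qratio (Suc a)) * site_diff i a b"
proof -
  let ?S = "\<phi> (qq ^ (2 * Suc a))" and ?U = "\<phi> (inverse (qq ^ (2 * Suc a)))"
  let ?X = "\<beta>s i * \<beta> i ^ Suc a * \<beta>s i ^ b" and ?Y = "\<beta> i ^ Suc a * \<beta>s i ^ Suc b"
    and ?Z = "\<beta> i ^ a * \<beta>s i ^ b"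
  have "?Y = (\<beta> i ^ Suc a * \<beta>s i) * \<beta>s i ^ b"
    by (simp only: power_Suc mult.assoc)
  also have "\<dots> = ?S * ?X + (1 - ?S) * ?Z"
    by (simp only: beta_power_betas[OF i] distrib_right mult.assoc)
  finally have Y: "?Y = ?S * ?X + (1 - ?S) * ?Z" .
  have "(\<beta> i ^ Suc a * \<beta>s i - \<beta>s i * \<beta> i ^ Suc a) * \<beta>s i ^ b = - (?X - ?Y)"
    by (simp only: left_diff_distrib power_Suc mult.assoc minus_diff_eq)
  also have "\<dots> = (1 - ?S) * ?U * (?Z - ?Y)"
    by (simp only: unit_shift_diff[OF phi_qq_power_inverse Y] minus_minus)
  finally show ?thesis
    unfolding phi_qratio site_diff_def .
qed

definition site_factor :: "(nat \<Rightarrow> nat) \<Rightarrow> nat \<Rightarrow> 'a" where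
  "site_factor \<alpha> k = \<beta> k ^ \<alpha> k * \<beta>s k ^ \<alpha> (site_pred n k)"

definition site_prod :: "(nat \<Rightarrow> 'a) \<Rightarrow> 'a" where
  "site_prod f = prod_list (map f (rev [1..<n+1]))"

definition site_local :: "(nat \<Rightarrow> 'a) \<Rightarrow> bool" where
  "site_local f \<longleftrightarrow> (\<forall>k\<in>{1..n}. f k \<in> site_subring k)"

lemma set_sites: "set (rev [1..<n+1]) = {1..n}"
  by (simp only: set_rev set_upt) auto

lemma site_local_site_factor: "site_local (site_factor \<alpha>)"
  unfolding site_local_def site_factor_def by (intro ballI site_subring.intros site_subring_power)

lemma site_local_fun_upd: "site_local f \<Longrightarrow> w \<in> site_subring i \<Longrightarrow> site_local (f(i := w))"
  by (simp add: site_local_def)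

lemma site_prod_fun_upd_split:
  assumes i: "i \<in> {1..n}" and f: "site_local f"
  obtains L R where "\<And>w. site_prod (f(i := w)) = L * w * R"
    and "\<And>x. x \<in> site_subring i \<Longrightarrow> x * L = L * x \<and> x * R = R * x"
proof -
  have xs: "distinct (rev [1..<n+1])" "i \<in> set (rev [1..<n+1])"
    using i by (simp_all only: distinct_rev distinct_upt set_sites)
  obtain ys zs where yz: "set ys \<union> set zs = set (rev [1..<n+1]) - {i}"
    and split: "\<And>w. prod_list (map (f(i := w)) (rev [1..<n+1])) = prod_list (map f ys) * w * prod_list (map f zs)"
    using prod_list_map_fun_upd_split[OF xs, where f = f] by blast
  have "x * f k = f k * x" if x: "x \<in> site_subring i" and "k \<in> set ys \<union> set zs" for x k
  proof -
    from that(2) yz have k: "k \<in> {1..n}" "k \<noteq> i"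
      unfolding set_sites by blast+
    with f have "f k \<in> site_subring k"
      by (simp add: site_local_def)
    from site_subring_commute[OF k(1) i k(2) x this] show ?thesis .
  qed
  then show thesis
    by (intro that[of "prod_list (map f ys)" "prod_list (map f zs)"] conjI prod_list_commute)
       (auto simp only: site_prod_def split set_map image_iff)
qed

lemma site_prod_fun_upd_diff:
  assumes "i \<in> {1..n}" "site_local f"
  shows "site_prod (f(i := u - v)) = site_prod (f(i := u)) - site_prod (f(i := v))"
proof -
  obtain L R where "\<And>w. site_prod (f(i := w)) = L * w * R"
    and "\<And>x. x \<in> site_subring i \<Longrightarrow> x * L = L * x \<and> x * R = R * x"
    using site_prod_fun_upd_split[OF assms] by blast
  then show ?thesis
    by (simp add: left_diff_distrib right_diff_distrib)
qed

lemma site_prod_fun_upd_phi: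
  assumes "i \<in> {1..n}" "site_local f"
  shows "site_prod (f(i := \<phi> c * u)) = \<phi> c * site_prod (f(i := u))"
proof -
  obtain L R where "\<And>w. site_prod (f(i := w)) = L * w * R"
    and "\<And>x. x \<in> site_subring i \<Longrightarrow> x * L = L * x \<and> x * R = R * x"
    using site_prod_fun_upd_split[OF assms] by blast
  then show ?thesis
    by (simp add: phi_left_commute mult.assoc)
qed

lemma site_prod_fun_upd_0:
  assumes "i \<in> {1..n}" "site_local f"
  shows "site_prod (f(i := 0)) = 0"
proof -
  obtain L R where "\<And>w. site_prod (f(i := w)) = L * w * R"
    and "\<And>x. x \<in> site_subring i \<Longrightarrow> x * L = L * x \<and> x * R = R * x"
    using site_prod_fun_upd_split[OF assms] by blast
  then show ?thesis
    by simp
qed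

lemma site_prod_mult_left:
  assumes "i \<in> {1..n}" "site_local f" "x \<in> site_subring i"
  shows "x * site_prod f = site_prod (f(i := x * f i))"
proof -
  obtain L R where LR: "\<And>w. site_prod (f(i := w)) = L * w * R" "x * L = L * x"
    using site_prod_fun_upd_split[OF assms(1,2)] assms(3) by metis
  have "x * site_prod f = x * site_prod (f(i := f i))"
    by simp
  then show ?thesis
    by (simp only: LR mult.assoc[symmetric])
qed

lemma site_prod_mult_right:
  assumes "i \<in> {1..n}" "site_local f" "x \<in> site_subring i"
  shows "site_prod f * x = site_prod (f(i := f i * x))"
proof -
  obtain L R where LR: "\<And>w. site_prod (f(i := w)) = L * w * R" "x * R = R * x"
    using site_prod_fun_upd_split[OF assms(1,2)] assms(3) by metis
  have "site_prod f * x = site_prod (f(i := f i)) * x"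
    by simp
  then show ?thesis
    by (simp only: LR mult.assoc)
qed

lemma site_prod_cong: "(\<And>k. k \<in> {1..n} \<Longrightarrow> f k = g k) \<Longrightarrow> site_prod f = site_prod g"
  unfolding site_prod_def by (intro arg_cong[where f = prod_list] map_cong) (simp_all only: set_sites)

lemma power_mult_commuting:
  fixes x y :: "'b::monoid_mult"
  shows "x * y = y * x \<Longrightarrow> (x * y) ^ a = x ^ a * y ^ a"
proof (induction a)
  case (Suc a)
  have "(x * y) ^ Suc a = x * (y * x ^ a) * y ^ a"
    by (simp only: power_Suc Suc.IH[OF Suc.prems] mult.assoc)
  also have "y * x ^ a = x ^ a * y"
    using power_commuting_commutes[OF Suc.prems] by simp
  finally show ?case
    by (simp add: mult.assoc)
qed simp

text \<open>Partial products of the monomial of Q^-_r regrouped by the sites m, ..., 1: site m carries an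
  arbitrary power \<beta>_m^y (at m = n the leading \<beta>_n^\<alpha>_n), and site 1 does not yet carry \<beta>*_1^\<alpha>_n.\<close>

lemma ordered_monomial_prefix:
  assumes "1 \<le> m" "m \<le> n"
  shows "\<beta> m ^ y * prod_list (map (\<lambda>i. (\<beta> i * \<beta>s (i + 1)) ^ \<alpha> i) (rev [1..<m])) =
    prod_list (map (\<lambda>k. (if k = m then \<beta> k ^ y else \<beta> k ^ \<alpha> k) * (if k = 1 then 1 else \<beta>s k ^ \<alpha> (k - 1)))
      (rev [1..<m+1]))"
  using assms
proof (induction m arbitrary: y rule: nat_induct_at_least)
  case base
  then show ?case by simp
next
  case (Suc m)
  let ?g = "\<lambda>i. (\<beta> i * \<beta>s (i + 1)) ^ \<alpha> i"
  let ?R = "prod_list (map ?g (rev [1..<m]))"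
  have r1: "rev [1..<Suc m] = m # rev [1..<m]"
    using Suc.hyps by simp
  have r2: "rev [1..<Suc m + 1] = Suc m # rev [1..<m + 1]"
    by simp
  have mn: "m \<in> {1..n}" "Suc m \<in> {1..n}"
    using Suc by auto
  have c1: "\<beta> m * \<beta>s (Suc m) = \<beta>s (Suc m) * \<beta> m"
    using beta_betas_commute[OF mn] by simp
  have c2: "\<beta> m ^ \<alpha> m * \<beta>s (Suc m) ^ \<alpha> m = \<beta>s (Suc m) ^ \<alpha> m * \<beta> m ^ \<alpha> m"
    by (rule site_subring_commute[OF mn(2) mn(1) _ site_subring_power site_subring_power])
       (simp_all add: site_subring.intros)
  have "\<beta> (Suc m) ^ y * prod_list (map ?g (rev [1..<Suc m])) =
        \<beta> (Suc m) ^ y * (\<beta> m ^ \<alpha> m * \<beta>s (Suc m) ^ \<alpha> m * ?R)"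
    unfolding r1 by (simp add: power_mult_commuting[OF c1])
  also have "\<dots> = (\<beta> (Suc m) ^ y * \<beta>s (Suc m) ^ \<alpha> m) * (\<beta> m ^ \<alpha> m * ?R)"
    by (simp add: c2 mult.assoc)
  also have "\<beta> m ^ \<alpha> m * ?R = prod_list (map (\<lambda>k. (if k = m then \<beta> k ^ \<alpha> m else \<beta> k ^ \<alpha> k)
      * (if k = 1 then 1 else \<beta>s k ^ \<alpha> (k - 1))) (rev [1..<m+1]))"
    using Suc by simp
  also have "\<dots> = prod_list (map (\<lambda>k. (if k = Suc m then \<beta> k ^ y else \<beta> k ^ \<alpha> k)
      * (if k = 1 then 1 else \<beta>s k ^ \<alpha> (k - 1))) (rev [1..<m+1]))"
    by (intro arg_cong[where f = prod_list] map_cong) auto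
  finally show ?case
    using Suc.hyps by (simp only: r2) simp
qed

lemma ordered_monomial_eq_site_prod:
  "\<beta> n ^ \<alpha> n * prod_list (map (\<lambda>i. (\<beta> i * \<beta>s (i + 1)) ^ \<alpha> i) (rev [1..<n])) * \<beta>s 1 ^ \<alpha> n
    = site_prod (site_factor \<alpha>)"
proof -
  let ?h = "\<lambda>k. (if k = n then \<beta> k ^ \<alpha> n else \<beta> k ^ \<alpha> k) * (if k = 1 then 1 else \<beta>s k ^ \<alpha> (k - 1))"
  have "[1..<n+1] = 1 # [Suc 1..<n+1]"
    by (rule upt_conv_Cons) (use n_ge_1 in simp)
  then have r: "rev [1..<n+1] = rev [Suc 1..<n+1] @ [1]"
    by (simp only: rev.simps)
  have h1: "prod_list (map ?h (rev [Suc 1..<n+1])) = prod_list (map (site_factor \<alpha>) (rev [Suc 1..<n+1]))"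
    by (intro arg_cong[where f = prod_list] map_cong refl)
       (auto simp: site_factor_def site_pred_def simp del: upt_Suc)
  have h2: "?h 1 * \<beta>s 1 ^ \<alpha> n = site_factor \<alpha> 1"
    by (simp add: site_factor_def site_pred_def)
  have "\<beta> n ^ \<alpha> n * prod_list (map (\<lambda>i. (\<beta> i * \<beta>s (i + 1)) ^ \<alpha> i) (rev [1..<n])) * \<beta>s 1 ^ \<alpha> n
      = prod_list (map ?h (rev [1..<n+1])) * \<beta>s 1 ^ \<alpha> n"
    by (simp only: ordered_monomial_prefix[OF n_ge_1 order_refl, of "\<alpha> n" \<alpha>])
  also have "\<dots> = prod_list (map ?h (rev [Suc 1..<n+1])) * (?h 1 * \<beta>s 1 ^ \<alpha> n)"
    by (simp only: r map_append prod_list.append list.map prod_list.Cons prod_list.Nil mult_1_right mult.assoc)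
  also have "\<dots> = prod_list (map (site_factor \<alpha>) (rev [Suc 1..<n+1])) * site_factor \<alpha> 1"
    by (simp only: h1 h2)
  also have "\<dots> = site_prod (site_factor \<alpha>)"
    unfolding site_prod_def
    by (simp only: r map_append prod_list.append list.map prod_list.Cons prod_list.Nil mult_1_right)
  finally show ?thesis .
qed

abbreviation Qc :: "nat \<Rightarrow> 'a" where
  "Qc \<equiv> Qminus_coeff n \<phi> \<beta> \<beta>s"

lemma Qminus_coeff_eq: "Qc r = (\<Sum>\<alpha>\<in>compositions n r. \<phi> (qweight n \<alpha>) * site_prod (site_factor \<alpha>))"
  unfolding Qminus_coeff_def qweight_def by (simp only: ordered_monomial_eq_site_prod)

lemma Qminus_coeff_0: "Qc 0 = 1"
  by (simp add: Qminus_coeff_def compositions_0 qpoch_def phi_one map_replicate_const)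

lemma site_prod_commutator_beta:
  assumes j: "j \<in> {1..n}"
  defines "p \<equiv> site_pred n j"
  shows "site_prod (site_factor \<alpha>) * \<beta> j - \<beta> j * site_prod (site_factor \<alpha>) =
    (if \<alpha> p = 0 then 0
     else - (\<phi> (qratio (\<alpha> p)) * site_prod ((site_factor \<alpha>)(j := site_diff j (\<alpha> j) (\<alpha> p - 1)))))"
proof -
  note local = site_local_site_factor[of \<alpha>]
  have "site_prod (site_factor \<alpha>) * \<beta> j - \<beta> j * site_prod (site_factor \<alpha>)
      = site_prod ((site_factor \<alpha>)(j := site_factor \<alpha> j * \<beta> j - \<beta> j * site_factor \<alpha> j))"
    unfolding site_prod_fun_upd_diff[OF j local] site_prod_mult_right[OF j local site_subring.beta]
      site_prod_mult_left[OF j local site_subring.beta] ..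
  also have "site_factor \<alpha> j * \<beta> j - \<beta> j * site_factor \<alpha> j
      = \<beta> j ^ \<alpha> j * (\<beta>s j ^ \<alpha> p * \<beta> j - \<beta> j * \<beta>s j ^ \<alpha> p)"
    unfolding site_factor_def p_def
    by (simp add: right_diff_distrib mult.assoc power_commutes flip: mult.assoc)
  finally have commutator: "site_prod (site_factor \<alpha>) * \<beta> j - \<beta> j * site_prod (site_factor \<alpha>)
      = site_prod ((site_factor \<alpha>)(j := \<beta> j ^ \<alpha> j * (\<beta>s j ^ \<alpha> p * \<beta> j - \<beta> j * \<beta>s j ^ \<alpha> p)))" .
  show ?thesis
  proof (cases "\<alpha> p")
    case 0
    then show ?thesis
      using commutator site_prod_fun_upd_0[OF j local] by simp
  next
    case (Suc b)
    have "site_prod (site_factor \<alpha>) * \<beta> j - \<beta> j * site_prod (site_factor \<alpha>)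
        = site_prod ((site_factor \<alpha>)(j := \<phi> (- qratio (Suc b)) * site_diff j (\<alpha> j) b))"
      using commutator commutator_betas_power_beta[OF j, of "\<alpha> j" b] Suc by (simp add: phi_minus)
    also have "\<dots> = \<phi> (- qratio (Suc b)) * site_prod ((site_factor \<alpha>)(j := site_diff j (\<alpha> j) b))"
      by (rule site_prod_fun_upd_phi[OF j local])
    finally show ?thesis
      using Suc by (simp add: phi_minus)
  qed
qed

lemma site_prod_commutator_betas:
  assumes j: "j \<in> {1..n}"
  defines "p \<equiv> site_pred n j"
  shows "site_prod (site_factor \<alpha>) * \<beta>s j - \<beta>s j * site_prod (site_factor \<alpha>) =
    (if \<alpha> j = 0 then 0
     else \<phi> (qratio (\<alpha> j)) * site_prod ((site_factor \<alpha>)(j := site_diff j (\<alpha> j - 1) (\<alpha> p))))"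
proof -
  note local = site_local_site_factor[of \<alpha>]
  have "site_prod (site_factor \<alpha>) * \<beta>s j - \<beta>s j * site_prod (site_factor \<alpha>)
      = site_prod ((site_factor \<alpha>)(j := site_factor \<alpha> j * \<beta>s j - \<beta>s j * site_factor \<alpha> j))"
    unfolding site_prod_fun_upd_diff[OF j local] site_prod_mult_right[OF j local site_subring.betas]
      site_prod_mult_left[OF j local site_subring.betas] ..
  also have "site_factor \<alpha> j * \<beta>s j - \<beta>s j * site_factor \<alpha> j
      = (\<beta> j ^ \<alpha> j * \<beta>s j - \<beta>s j * \<beta> j ^ \<alpha> j) * \<beta>s j ^ \<alpha> p"
    unfolding site_factor_def p_def by (simp add: left_diff_distrib mult.assoc power_commutes)
  finally have commutator: "site_prod (site_factor \<alpha>) * \<beta>s j - \<beta>s j * site_prod (site_factor \<alpha>)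
      = site_prod ((site_factor \<alpha>)(j := (\<beta> j ^ \<alpha> j * \<beta>s j - \<beta>s j * \<beta> j ^ \<alpha> j) * \<beta>s j ^ \<alpha> p))" .
  show ?thesis
  proof (cases "\<alpha> j")
    case 0
    then show ?thesis
      using commutator site_prod_fun_upd_0[OF j local] by simp
  next
    case (Suc a)
    then show ?thesis
      using commutator commutator_beta_power_betas[OF j, of a "\<alpha> p"] site_prod_fun_upd_phi[OF j local]
      by simp
  qed
qed

lemma site_prod_sandwich:
  assumes j: "j \<in> {1..n}"
  shows "site_prod (site_factor \<gamma>) - \<beta> j * site_prod (site_factor \<gamma>) * \<beta>s j
    = site_prod ((site_factor \<gamma>)(j := site_diff j (\<gamma> j) (\<gamma> (site_pred n j))))"
proof -
  note local = site_local_site_factor[of \<gamma>]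
  have local': "site_local ((site_factor \<gamma>)(j := \<beta> j * site_factor \<gamma> j))"
    by (intro site_local_fun_upd local site_subring.mult site_subring.beta)
      (use local j in \<open>simp add: site_local_def\<close>)
  have "\<beta> j * site_prod (site_factor \<gamma>) * \<beta>s j
      = site_prod ((site_factor \<gamma>)(j := \<beta> j * site_factor \<gamma> j * \<beta>s j))"
    unfolding site_prod_mult_left[OF j local site_subring.beta]
      site_prod_mult_right[OF j local' site_subring.betas] by simp
  then have "site_prod (site_factor \<gamma>) - \<beta> j * site_prod (site_factor \<gamma>) * \<beta>s j
      = site_prod ((site_factor \<gamma>)(j := site_factor \<gamma> j - \<beta> j * site_factor \<gamma> j * \<beta>s j))"
    using site_prod_fun_upd_diff[OF j local] by simp
  also have "site_factor \<gamma> j - \<beta> j * site_factor \<gamma> j * \<beta>s j = site_diff j (\<gamma> j) (\<gamma> (site_pred n j))"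
    unfolding site_factor_def site_diff_def
    by (simp add: mult.assoc power_commutes del: power_Suc) (simp add: power_Suc2 mult.assoc)
  finally show ?thesis .
qed

lemma beta_pred_mult_sandwich:
  fixes \<gamma> :: "nat \<Rightarrow> nat"
  assumes j: "j \<in> {1..n}"
  defines "p \<equiv> site_pred n j" and "\<alpha> \<equiv> \<gamma>(site_pred n j := Suc (\<gamma> (site_pred n j)))"
  shows "\<beta> p * (site_prod (site_factor \<gamma>) - \<beta> j * site_prod (site_factor \<gamma>) * \<beta>s j)
    = site_prod ((site_factor \<alpha>)(j := site_diff j (\<alpha> j) (\<gamma> p)))"
proof -
  let ?f = "(site_factor \<gamma>)(j := site_diff j (\<gamma> j) (\<gamma> p))"
  have p: "p \<in> {1..n}"
    unfolding p_def using site_pred_in[OF j] .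
  have local: "site_local ?f"
    by (intro site_local_fun_upd site_local_site_factor site_diff_in)
  have "\<beta> p * (site_prod (site_factor \<gamma>) - \<beta> j * site_prod (site_factor \<gamma>) * \<beta>s j)
      = site_prod (?f(p := \<beta> p * ?f p))"
    unfolding site_prod_sandwich[OF j, folded p_def] site_prod_mult_left[OF p local site_subring.beta] ..
  also have "\<dots> = site_prod ((site_factor \<alpha>)(j := site_diff j (\<alpha> j) (\<gamma> p)))"
  proof (rule site_prod_cong)
    fix k assume k: "k \<in> {1..n}"
    show "(?f(p := \<beta> p * ?f p)) k = ((site_factor \<alpha>)(j := site_diff j (\<alpha> j) (\<gamma> p))) k"
    proof (cases "n = 1")
      case True
      then have "p = j" "k = j"
        using j k site_pred_succ_one_site[of j] by (auto simp: p_def)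
      then show ?thesis
        unfolding site_diff_def \<alpha>_def p_def[symmetric]
        by (simp add: right_diff_distrib mult.assoc del: power_Suc) (simp add: mult.assoc)
    next
      case False
      then have n2: "2 \<le> n"
        using n_ge_1 by simp
      have "p \<noteq> j" "site_pred n p \<noteq> p"
        using site_pred_neq[OF n2 j] site_pred_neq[OF n2 p] by (simp_all add: p_def)
      moreover have "site_pred n k \<noteq> p" if "k \<noteq> j"
        using site_pred_inj[OF j k] that by (auto simp: p_def)
      ultimately show ?thesis
        by (cases "k = p"; cases "k = j") (simp_all add: site_factor_def \<alpha>_def p_def[symmetric] mult.assoc)
    qed
  qed
  finally show ?thesis .
qed

lemma sandwich_mult_betas_succ:
  fixes \<gamma> :: "nat \<Rightarrow> nat"
  assumes j: "j \<in> {1..n}"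
  defines "s \<equiv> site_succ n j" and "\<alpha> \<equiv> \<gamma>(j := Suc (\<gamma> j))"
  shows "(site_prod (site_factor \<gamma>) - \<beta> j * site_prod (site_factor \<gamma>) * \<beta>s j) * \<beta>s s
    = site_prod ((site_factor \<alpha>)(j := site_diff j (\<gamma> j) (\<alpha> (site_pred n j))))"
proof -
  let ?p = "site_pred n j"
  let ?f = "(site_factor \<gamma>)(j := site_diff j (\<gamma> j) (\<gamma> ?p))"
  have s: "s \<in> {1..n}"
    unfolding s_def using site_succ_in[OF j] .
  have local: "site_local ?f"
    by (intro site_local_fun_upd site_local_site_factor site_diff_in)
  have "(site_prod (site_factor \<gamma>) - \<beta> j * site_prod (site_factor \<gamma>) * \<beta>s j) * \<beta>s s
      = site_prod (?f(s := ?f s * \<beta>s s))"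
    unfolding site_prod_sandwich[OF j] site_prod_mult_right[OF s local site_subring.betas] ..
  also have "\<dots> = site_prod ((site_factor \<alpha>)(j := site_diff j (\<gamma> j) (\<alpha> ?p)))"
  proof (rule site_prod_cong)
    fix k assume k: "k \<in> {1..n}"
    show "(?f(s := ?f s * \<beta>s s)) k = ((site_factor \<alpha>)(j := site_diff j (\<gamma> j) (\<alpha> ?p))) k"
    proof (cases "n = 1")
      case True
      then have "?p = j" "s = j" "k = j"
        using j k site_pred_succ_one_site[of j] by (auto simp: s_def)
      then show ?thesis
        unfolding site_diff_def \<alpha>_def
        by (simp add: left_diff_distrib mult.assoc del: power_Suc) (simp add: power_commutes mult.assoc)
    next
      case False
      then have n2: "2 \<le> n"
        using n_ge_1 by simp
      have "?p \<noteq> j" "s \<noteq> j" "site_pred n s = j"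
        using site_pred_neq[OF n2 j] site_succ_neq[OF n2 j] site_pred_site_succ[OF j]
        by (simp_all add: s_def)
      moreover have "site_pred n k \<noteq> j" if "k \<noteq> s"
        using site_pred_inj[OF s k] that \<open>site_pred n s = j\<close> by auto
      ultimately show ?thesis
        by (cases "k = s"; cases "k = j")
           (simp_all add: site_factor_def \<alpha>_def mult.assoc power_Suc2 del: power_Suc)
    qed
  qed
  finally show ?thesis .
qed

lemma phi_qweight_Suc:
  "i \<in> {1..n} \<Longrightarrow> \<phi> (qweight n (\<gamma>(i := Suc (\<gamma> i)))) * \<phi> (qratio (Suc (\<gamma> i))) = \<phi> (qweight n \<gamma>)"
  by (simp only: phi_mult[symmetric] qweight_Suc)

lemma sum_phi_commutator:
  "(\<Sum>\<alpha>\<in>A. \<phi> (c \<alpha>) * X \<alpha>) * y - y * (\<Sum>\<alpha>\<in>A. \<phi> (c \<alpha>) * X \<alpha>) = (\<Sum>\<alpha>\<in>A. \<phi> (c \<alpha>) * (X \<alpha> * y - y * X \<alpha>))"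
  by (simp add: sum_distrib_right sum_distrib_left sum_subtractf[symmetric] right_diff_distrib
      phi_left_commute mult.assoc)

lemma sum_phi_sandwich:
  "(\<Sum>\<alpha>\<in>A. \<phi> (c \<alpha>) * X \<alpha>) - x * (\<Sum>\<alpha>\<in>A. \<phi> (c \<alpha>) * X \<alpha>) * y = (\<Sum>\<alpha>\<in>A. \<phi> (c \<alpha>) * (X \<alpha> - x * X \<alpha> * y))"
  by (simp add: sum_distrib_right sum_distrib_left sum_subtractf[symmetric] right_diff_distrib
      phi_left_commute mult.assoc)

lemma Qminus_coeff_commutator_beta:
  assumes j: "j \<in> {1..n}"
  defines "p \<equiv> site_pred n j"
  shows "Qc (Suc r) * \<beta> j - \<beta> j * Qc (Suc r) = - (\<beta> p * (Qc r - \<beta> j * Qc r * \<beta>s j))"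
proof -
  have p: "p \<in> {1..n}"
    unfolding p_def using site_pred_in[OF j] .
  let ?T = "\<lambda>\<alpha>. \<phi> (qweight n \<alpha>) * (site_prod (site_factor \<alpha>) * \<beta> j - \<beta> j * site_prod (site_factor \<alpha>))"
  let ?S = "\<lambda>\<gamma>. \<phi> (qweight n \<gamma>) * (site_prod (site_factor \<gamma>) - \<beta> j * site_prod (site_factor \<gamma>) * \<beta>s j)"
  have "Qc (Suc r) * \<beta> j - \<beta> j * Qc (Suc r) = (\<Sum>\<alpha>\<in>compositions n (Suc r). ?T \<alpha>)"
    unfolding Qminus_coeff_eq by (rule sum_phi_commutator)
  also have "\<dots> = (\<Sum>\<gamma>\<in>compositions n r. ?T (\<gamma>(p := Suc (\<gamma> p))))"
    by (rule sum_compositions_Suc[OF p]) (simp add: site_prod_commutator_beta[OF j, folded p_def])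
  also have "\<dots> = (\<Sum>\<gamma>\<in>compositions n r. - (\<beta> p * ?S \<gamma>))"
  proof (rule sum.cong[OF refl])
    fix \<gamma> :: "nat \<Rightarrow> nat"
    let ?\<alpha> = "\<gamma>(p := Suc (\<gamma> p))"
    have "?T ?\<alpha> = - ((\<phi> (qweight n ?\<alpha>) * \<phi> (qratio (Suc (\<gamma> p))))
        * site_prod ((site_factor ?\<alpha>)(j := site_diff j (?\<alpha> j) (\<gamma> p))))"
      by (simp only: site_prod_commutator_beta[OF j, folded p_def] fun_upd_same nat.distinct(2) if_False
          diff_Suc_1 mult_minus_right mult.assoc)
    also have "\<dots> = - (\<phi> (qweight n \<gamma>) * (\<beta> p * (site_prod (site_factor \<gamma>)
        - \<beta> j * site_prod (site_factor \<gamma>) * \<beta>s j)))"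
      by (simp only: phi_qweight_Suc[OF p] beta_pred_mult_sandwich[OF j, folded p_def, symmetric])
    finally show "?T ?\<alpha> = - (\<beta> p * ?S \<gamma>)"
      by (simp only: phi_left_commute)
  qed
  also have "\<dots> = - (\<beta> p * (Qc r - \<beta> j * Qc r * \<beta>s j))"
    unfolding Qminus_coeff_eq sum_phi_sandwich by (simp add: sum_negf sum_distrib_left)
  finally show ?thesis .
qed

lemma Qminus_coeff_commutator_betas:
  assumes j: "j \<in> {1..n}"
  defines "s \<equiv> site_succ n j"
  shows "Qc (Suc r) * \<beta>s j - \<beta>s j * Qc (Suc r) = (Qc r - \<beta> j * Qc r * \<beta>s j) * \<beta>s s"
proof -
  let ?T = "\<lambda>\<alpha>. \<phi> (qweight n \<alpha>) * (site_prod (site_factor \<alpha>) * \<beta>s j - \<beta>s j * site_prod (site_factor \<alpha>))"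
  let ?S = "\<lambda>\<gamma>. \<phi> (qweight n \<gamma>) * (site_prod (site_factor \<gamma>) - \<beta> j * site_prod (site_factor \<gamma>) * \<beta>s j)"
  have "Qc (Suc r) * \<beta>s j - \<beta>s j * Qc (Suc r) = (\<Sum>\<alpha>\<in>compositions n (Suc r). ?T \<alpha>)"
    unfolding Qminus_coeff_eq by (rule sum_phi_commutator)
  also have "\<dots> = (\<Sum>\<gamma>\<in>compositions n r. ?T (\<gamma>(j := Suc (\<gamma> j))))"
    by (rule sum_compositions_Suc[OF j]) (simp add: site_prod_commutator_betas[OF j])
  also have "\<dots> = (\<Sum>\<gamma>\<in>compositions n r. ?S \<gamma> * \<beta>s s)"
  proof (rule sum.cong[OF refl])
    fix \<gamma> :: "nat \<Rightarrow> nat"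
    let ?\<alpha> = "\<gamma>(j := Suc (\<gamma> j))"
    have "?T ?\<alpha> = (\<phi> (qweight n ?\<alpha>) * \<phi> (qratio (Suc (\<gamma> j))))
        * site_prod ((site_factor ?\<alpha>)(j := site_diff j (\<gamma> j) (?\<alpha> (site_pred n j))))"
      by (simp only: site_prod_commutator_betas[OF j] fun_upd_same nat.distinct(2) if_False
          diff_Suc_1 mult.assoc)
    also have "\<dots> = \<phi> (qweight n \<gamma>) * ((site_prod (site_factor \<gamma>)
        - \<beta> j * site_prod (site_factor \<gamma>) * \<beta>s j) * \<beta>s s)"
      by (simp only: phi_qweight_Suc[OF j] sandwich_mult_betas_succ[OF j, folded s_def, symmetric])
    finally show "?T ?\<alpha> = ?S \<gamma> * \<beta>s s"
      by (simp only: mult.assoc)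
  qed
  also have "\<dots> = (Qc r - \<beta> j * Qc r * \<beta>s j) * \<beta>s s"
    unfolding Qminus_coeff_eq sum_phi_sandwich by (simp add: sum_distrib_right)
  finally show ?thesis .
qed

abbreviation Q :: "'a fps" where
  "Q \<equiv> Qminus n \<phi> \<beta> \<beta>s"

lemma Qminus_sandwich_nth:
  "fps_nth (Q - fps_const x * Q * fps_const y) m = Qc m - x * Qc m * y"
  by (simp add: Qminus_def)

lemma Qminus_commutator_beta:
  assumes j: "j \<in> {1..n}"
  shows "Q * fps_const (\<beta> j) - fps_const (\<beta> j) * Q
    = - (fps_X * fps_const (\<beta> (site_pred n j)) * (Q - fps_const (\<beta> j) * Q * fps_const (\<beta>s j)))"
proof (rule fps_ext)
  fix m
  show "fps_nth (Q * fps_const (\<beta> j) - fps_const (\<beta> j) * Q) m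
    = fps_nth (- (fps_X * fps_const (\<beta> (site_pred n j)) * (Q - fps_const (\<beta> j) * Q * fps_const (\<beta>s j)))) m"
    by (cases m) (simp_all only: mult.assoc fps_neg_nth fps_X_mult_nth fps_mult_left_const_nth
        Qminus_sandwich_nth, simp_all add: Qminus_def Qminus_coeff_0 Qminus_coeff_commutator_beta[OF j] mult.assoc)
qed

lemma Qminus_commutator_betas:
  assumes j: "j \<in> {1..n}"
  shows "Q * fps_const (\<beta>s j) - fps_const (\<beta>s j) * Q
    = fps_X * (Q - fps_const (\<beta> j) * Q * fps_const (\<beta>s j)) * fps_const (\<beta>s (site_succ n j))"
proof (rule fps_ext)
  fix m
  show "fps_nth (Q * fps_const (\<beta>s j) - fps_const (\<beta>s j) * Q) m
    = fps_nth (fps_X * (Q - fps_const (\<beta> j) * Q * fps_const (\<beta>s j)) * fps_const (\<beta>s (site_succ n j))) m"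
    by (cases m) (simp_all only: fps_mult_right_const_nth fps_X_mult_nth Qminus_sandwich_nth,
        simp_all add: Qminus_def Qminus_coeff_0 Qminus_coeff_commutator_betas[OF j])
qed

end

theorem mainTheorem9:
  fixes n :: nat and \<phi> :: "Cq \<Rightarrow> 'a::ring_1" and \<beta> \<beta>s K Ki :: "nat \<Rightarrow> 'a" and j :: nat
  assumes "n \<ge> 1"
    and "qboson_alg n \<phi> \<beta> \<beta>s K Ki"
    and "j \<in> {1..n}"
  defines "Q \<equiv> Qminus n \<phi> \<beta> \<beta>s"
  shows "Q * fps_const (\<beta> j) - fps_const (\<beta> j) * Q =
           - (fps_X * fps_const (\<beta> (site_pred n j)) *
              (Q - fps_const (\<beta> j) * Q * fps_const (\<beta>s j))) \<and>
         Q * fps_const (\<beta>s j) - fps_const (\<beta>s j) * Q =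
           fps_X * (Q - fps_const (\<beta> j) * Q * fps_const (\<beta>s j)) *
              fps_const (\<beta>s (site_succ n j))"
proof -
  interpret qboson n \<phi> \<beta> \<beta>s K Ki
    using assms(1,2) by unfold_locales
  show ?thesis
    unfolding Q_def using Qminus_commutator_beta[OF assms(3)] Qminus_commutator_betas[OF assms(3)] ..
qed

end
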